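(* Let $v$ be a weight on $\mathbb D$ and let $(X,\|\cdot\|)$ be a Banach space of analytic functions in $\mathbb D$. Let $\varphi$ be an entire function. If the superposition operator $S_\varphi$ is a bounded operator from $X$ into $H^\infty_v$, then $S_{\varphi'}$ maps $X$ into $H^\infty_v$, i.e. $\varphi'\circ f\in H^\infty_v$ for every $f\in X$.
   Context: For $\varphi$ entire, $S_\varphi(f)=\varphi\circ f$ for $f$ analytic in the unit disc $\mathbb D$. A weight on $\mathbb D$ is a positive continuous function $v$ on $\mathbb D$ which is radial ($v(z)=v(|z|)$), with $r\mapsto v(r)$ strictly decreasing on $[0,1)$ and $\lim_{r\to1}v(r)=0$. $H^\infty_v=\{f \text{ analytic in }\mathbb D:\|f\|_v=\sup_{z\in\mathbb D}v(z)|f(z)|<\infty\}$. "Bounded" for the (nonlinear) operator $S_\varphi$ means that it maps $X$ into $H^\infty_v$ and maps bounded subsets of $X$ to bounded subsets of $H^\infty_v$. *)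

theory Defs
  imports "HOL-Analysis.Analysis"
begin

definition weight :: "(complex \<Rightarrow> real) \<Rightarrow> bool" where
  "weight v \<longleftrightarrow>
     continuous_on (ball 0 1) v \<and>
     (\<forall>z\<in>ball 0 1. v z > 0) \<and>
     (\<forall>z\<in>ball 0 1. v z = v (complex_of_real (norm z))) \<and>
     strict_antimono_on {0..<1} (\<lambda>r::real. v (complex_of_real r)) \<and>
     ((\<lambda>r::real. v (complex_of_real r)) \<longlongrightarrow> 0) (at_left 1)"

definition wnorm :: "(complex \<Rightarrow> real) \<Rightarrow> (complex \<Rightarrow> complex) \<Rightarrow> real" where
  "wnorm v f = (SUP z\<in>ball 0 1. v z * cmod (f z))"

definition Hinf_v :: "(complex \<Rightarrow> real) \<Rightarrow> (complex \<Rightarrow> complex) set" where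
  "Hinf_v v = {f. f holomorphic_on ball 0 1 \<and> bdd_above ((\<lambda>z. v z * cmod (f z)) ` ball 0 1)}"

text \<open>A Banach space (X, N) of analytic functions on the disc: X is a complex vector
  space of functions analytic on the disc (functions are identified when they agree on
  the disc), N is a norm on X, and X is complete for N.\<close>
definition banach_space_analytic ::
  "(complex \<Rightarrow> complex) set \<Rightarrow> ((complex \<Rightarrow> complex) \<Rightarrow> real) \<Rightarrow> bool" where
  "banach_space_analytic X N \<longleftrightarrow>
     (\<forall>f\<in>X. f holomorphic_on ball 0 1) \<and>
     (\<lambda>z. 0) \<in> X \<and>
     (\<forall>f\<in>X. \<forall>g\<in>X. (\<lambda>z. f z + g z) \<in> X) \<and>
     (\<forall>c. \<forall>f\<in>X. (\<lambda>z. c * f z) \<in> X) \<and>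
     (\<forall>f\<in>X. \<forall>g\<in>X. (\<forall>z\<in>ball 0 1. f z = g z) \<longrightarrow> N f = N g) \<and>
     (\<forall>f\<in>X. N f \<ge> 0) \<and>
     (\<forall>f\<in>X. N f = 0 \<longleftrightarrow> (\<forall>z\<in>ball 0 1. f z = 0)) \<and>
     (\<forall>f\<in>X. \<forall>g\<in>X. N (\<lambda>z. f z + g z) \<le> N f + N g) \<and>
     (\<forall>c. \<forall>f\<in>X. N (\<lambda>z. c * f z) = cmod c * N f) \<and>
     (\<forall>F::nat \<Rightarrow> complex \<Rightarrow> complex. (\<forall>n. F n \<in> X) \<and>
        (\<forall>e>0. \<exists>M. \<forall>m\<ge>M. \<forall>n\<ge>M. N (\<lambda>z. F m z - F n z) < e) \<longrightarrow>
        (\<exists>g\<in>X. (\<lambda>n. N (\<lambda>z. F n z - g z)) \<longlonglongrightarrow> 0))"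

definition superpos :: "(complex \<Rightarrow> complex) \<Rightarrow> (complex \<Rightarrow> complex) \<Rightarrow> complex \<Rightarrow> complex" where
  "superpos \<phi> f = \<phi> \<circ> f"

definition superpos_bounded ::
  "(complex \<Rightarrow> complex) \<Rightarrow> (complex \<Rightarrow> complex) set \<Rightarrow> ((complex \<Rightarrow> complex) \<Rightarrow> real)
   \<Rightarrow> (complex \<Rightarrow> real) \<Rightarrow> bool" where
  "superpos_bounded \<phi> X N v \<longleftrightarrow>
     (\<forall>f\<in>X. superpos \<phi> f \<in> Hinf_v v) \<and>
     (\<forall>B\<subseteq>X. (\<exists>R. \<forall>f\<in>B. N f \<le> R) \<longrightarrow> (\<exists>C. \<forall>f\<in>B. wnorm v (superpos \<phi> f) \<le> C))"

end

theory Submission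
  imports Defs "HOL-Complex_Analysis.Cauchy_Integral_Formula"
begin

text \<open>Applying the bounded operator \<open>S\<^sub>\<phi>\<close> to the bounded family \<open>{c f : |c| \<le> 2}\<close> gives
  \<open>v(z) |\<phi>(w)| \<le> C\<close> for all \<open>|w| \<le> 2|f(z)|\<close>. Where \<open>|f(z)| \<ge> 1\<close>, the Cauchy inequality on the
  circle of radius \<open>|f(z)|\<close> about \<open>f(z)\<close> turns this into \<open>v(z) |\<phi>'(f(z))| \<le> C\<close>; where
  \<open>|f(z)| < 1\<close>, \<open>|\<phi>'(f(z))|\<close> is bounded by the maximum of \<open>|\<phi>'|\<close> on the closed unit disc and
  \<open>v(z) \<le> v(0)\<close>.\<close>

lemma weight_pos:
  assumes "weight v" "z \<in> ball 0 1"
  shows "v z > 0"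
  using assms unfolding weight_def by blast

lemma weight_le_center:
  assumes "weight v" "z \<in> ball 0 1"
  shows "v z \<le> v 0"
proof (cases "z = 0")
  case False
  have anti: "strict_antimono_on {0..<1} (\<lambda>r::real. v (complex_of_real r))"
    and "v z = v (complex_of_real (norm z))"
    using assms unfolding weight_def by blast+
  moreover have "v (complex_of_real (norm z)) < v (complex_of_real 0)"
    by (rule monotone_onD[OF anti]) (use assms(2) False in auto)
  ultimately show ?thesis by simp
qed simp

lemma Hinf_v_le_wnorm:
  assumes "f \<in> Hinf_v v" "z \<in> ball 0 1"
  shows "v z * cmod (f z) \<le> wnorm v f"
  unfolding wnorm_def
  by (rule cSUP_upper[OF assms(2)]) (use assms(1) in \<open>simp add: Hinf_v_def\<close>)

lemma superpos_bounded_on_dilations: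
  assumes X: "banach_space_analytic X N" and S: "superpos_bounded \<phi> X N v" and "f \<in> X"
  obtains C where "\<And>c z. cmod c \<le> R \<Longrightarrow> z \<in> ball 0 1 \<Longrightarrow> v z * cmod (\<phi> (c * f z)) \<le> C"
proof -
  define B where "B = {(\<lambda>z. c * f z) | c. cmod c \<le> R}"
  have BX: "B \<subseteq> X"
    using X \<open>f \<in> X\<close> unfolding B_def banach_space_analytic_def by blast
  have "N g \<le> R * N f" if "g \<in> B" for g
  proof -
    obtain c where c: "cmod c \<le> R" "g = (\<lambda>z. c * f z)" using \<open>g \<in> B\<close> unfolding B_def by blast
    have "N g = cmod c * N f" "N f \<ge> 0"
      using X \<open>f \<in> X\<close> c(2) unfolding banach_space_analytic_def by blast+
    with c(1) show ?thesis by (simp add: mult_right_mono)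
  qed
  then obtain C where C: "\<forall>g\<in>B. wnorm v (superpos \<phi> g) \<le> C"
    using S BX unfolding superpos_bounded_def by blast
  show ?thesis
  proof
    fix c z :: complex assume "cmod c \<le> R" and z: "z \<in> ball 0 1"
    then have g: "(\<lambda>z. c * f z) \<in> B" unfolding B_def by blast
    with S BX have "superpos \<phi> (\<lambda>z. c * f z) \<in> Hinf_v v"
      unfolding superpos_bounded_def by blast
    from Hinf_v_le_wnorm[OF this z] C g
    show "v z * cmod (\<phi> (c * f z)) \<le> C" by (force simp: superpos_def)
  qed
qed

lemma entire_deriv_le_of_bound_on_dilations:
  assumes "\<phi> holomorphic_on UNIV" "a \<noteq> 0"
    and bound: "\<And>c. cmod c \<le> 2 \<Longrightarrow> cmod (\<phi> (c * a)) \<le> M"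
  shows "cmod (deriv \<phi> a) \<le> M / cmod a"
proof -
  have "cmod ((deriv ^^ 1) \<phi> a) \<le> fact 1 * M / cmod a ^ 1"
  proof (rule Cauchy_inequality)
    show "\<phi> holomorphic_on ball a (cmod a)"
      using assms(1) by (rule holomorphic_on_subset) simp
    show "continuous_on (cball a (cmod a)) \<phi>"
      using holomorphic_on_imp_continuous_on[OF assms(1)] by (rule continuous_on_subset) simp
    show "0 < cmod a" using \<open>a \<noteq> 0\<close> by simp
  next
    fix x assume "cmod (a - x) = cmod a"
    then have "cmod x \<le> 2 * cmod a"
      using norm_triangle_ineq4[of a "a - x"] by simp
    then have "cmod (x / a) \<le> 2"
      using \<open>a \<noteq> 0\<close> by (simp add: norm_divide divide_le_eq)
    from bound[OF this] show "cmod (\<phi> x) \<le> M" using \<open>a \<noteq> 0\<close> by simp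
  qed
  then show ?thesis by simp
qed

lemma entire_deriv_bounded_on_cball:
  assumes "\<phi> holomorphic_on UNIV"
  obtains K where "K \<ge> 0" "\<And>w. w \<in> cball 0 1 \<Longrightarrow> cmod (deriv \<phi> w) \<le> K"
proof -
  have "continuous_on (cball 0 1) (deriv \<phi>)"
    using holomorphic_on_imp_continuous_on[OF holomorphic_deriv[OF assms open_UNIV]]
    by (rule continuous_on_subset) simp
  then have "bounded (deriv \<phi> ` cball 0 1)"
    by (intro compact_imp_bounded compact_continuous_image) simp_all
  then obtain K where K: "\<And>w. w \<in> cball 0 1 \<Longrightarrow> cmod (deriv \<phi> w) \<le> K"
    unfolding bounded_iff by blast
  moreover have "K \<ge> 0" using order_trans[OF norm_ge_zero K[of 0]] by simp
  ultimately show ?thesis using that by blast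
qed

lemma weighted_deriv_le:
  assumes "weight v" "\<phi> holomorphic_on UNIV" and z: "z \<in> ball 0 1"
    and C: "\<And>c. cmod c \<le> 2 \<Longrightarrow> v z * cmod (\<phi> (c * w)) \<le> C"
    and K: "K \<ge> 0" "\<And>u. u \<in> cball 0 1 \<Longrightarrow> cmod (deriv \<phi> u) \<le> K"
  shows "v z * cmod (deriv \<phi> w) \<le> max C (K * v 0)"
proof (cases "cmod w \<ge> 1")
  case True
  have vz: "v z > 0" using weight_pos[OF assms(1) z] .
  have "cmod (\<phi> (c * w)) \<le> C / v z" if "cmod c \<le> 2" for c
    using C[OF that] vz by (simp add: pos_le_divide_eq mult.commute)
  then have "cmod (deriv \<phi> w) \<le> C / v z / cmod w"
    using True by (intro entire_deriv_le_of_bound_on_dilations[OF assms(2)]) auto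
  also have "\<dots> \<le> C / v z"
  proof -
    have "0 \<le> v z * cmod (\<phi> 0)" using vz by simp
    also have "\<dots> \<le> C" using C[of 0] by simp
    finally have "C / v z \<ge> 0" using vz by simp
    then have "C / v z / cmod w \<le> C / v z / 1"
      by (rule divide_left_mono[OF True]) (use True in linarith)
    then show ?thesis by (simp only: div_by_1)
  qed
  finally show ?thesis using vz by (simp add: pos_le_divide_eq mult.commute)
next
  case False
  then have "cmod (deriv \<phi> w) \<le> K" using K(2) by simp
  then have "v z * cmod (deriv \<phi> w) \<le> v 0 * K"
    using weight_le_center[OF assms(1) z] weight_pos[OF assms(1) z] K(1)
    by (intro mult_mono) auto
  then show ?thesis by (simp add: mult.commute)
qed

theorem theorem4:
  fixes v :: "complex \<Rightarrow> real"
    and X :: "(complex \<Rightarrow> complex) set"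
    and N :: "(complex \<Rightarrow> complex) \<Rightarrow> real"
    and \<phi> :: "complex \<Rightarrow> complex"
  assumes "weight v"
    and "banach_space_analytic X N"
    and "\<phi> holomorphic_on UNIV"
    and "superpos_bounded \<phi> X N v"
  shows "\<forall>f\<in>X. superpos (deriv \<phi>) f \<in> Hinf_v v"
proof
  fix f assume "f \<in> X"
  then have f: "f holomorphic_on ball 0 1"
    using assms(2) unfolding banach_space_analytic_def by blast
  obtain C where C: "\<And>c z. cmod c \<le> 2 \<Longrightarrow> z \<in> ball 0 1 \<Longrightarrow> v z * cmod (\<phi> (c * f z)) \<le> C"
    using superpos_bounded_on_dilations[OF assms(2,4) \<open>f \<in> X\<close>] by blast
  obtain K where K: "K \<ge> 0" "\<And>w. w \<in> cball 0 1 \<Longrightarrow> cmod (deriv \<phi> w) \<le> K"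
    using entire_deriv_bounded_on_cball[OF assms(3)] by blast
  have "v z * cmod (deriv \<phi> (f z)) \<le> max C (K * v 0)" if "z \<in> ball 0 1" for z
    using weighted_deriv_le[OF assms(1,3) that C[OF _ that] K] .
  then have "bdd_above ((\<lambda>z. v z * cmod ((deriv \<phi> \<circ> f) z)) ` ball 0 1)"
    by (intro bdd_aboveI2) auto
  moreover have "(deriv \<phi> \<circ> f) holomorphic_on ball 0 1"
    using holomorphic_on_compose[OF f] holomorphic_deriv[OF assms(3) open_UNIV]
      holomorphic_on_subset by blast
  ultimately show "superpos (deriv \<phi>) f \<in> Hinf_v v"
    unfolding Hinf_v_def superpos_def by blast
qed

end
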